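(* Let $\kappa,\gamma\in\mathbb{N}^n$ and let $T:\mathbb{C}_\kappa[z_1,\ldots,z_n]\to\mathbb{C}_\gamma[z_1,\ldots,z_n]$ be a linear operator. Then the symbol of the polarization of $T$ is the polarization of the symbol of $T$, that is, $G_{\Pi(T)}=\Pi^\uparrow_{\gamma\oplus\kappa}(G_T)$.
   Context: $\mathbb{C}_\kappa[z_1,\ldots,z_n]$: polynomials of degree at most $\kappa_i$ in $z_i$. $\mathbb{C}_{MA}^\kappa$: multi-affine polynomials in variables $z_{ij}$, $1\le i\le n$, $1\le j\le\kappa_i$. Polarization $\Pi_\kappa^\uparrow:\mathbb{C}_\kappa[z]\to\mathbb{C}_{MA}^\kappa$ is linear with $\Pi_\kappa^\uparrow(z^\alpha)=\binom{\kappa}{\alpha}^{-1}\prod_{i}E_{\alpha_i}(z_{i1},\ldots,z_{i\kappa_i})$ ($E_k$ the $k$-th elementary symmetric polynomial, $\binom{\kappa}{\alpha}=\prod\binom{\kappa_i}{\alpha_i}$); the projection $\Pi_\kappa^\downarrow:\mathbb{C}_{MA}^\kappa\to\mathbb{C}_\kappa[z]$ substitutes $z_{ij}\mapsto z_i$. The polarization of $T$ is $\Pi(T)=\Pi_\gamma^\uparrow\circ T\circ\Pi_\kappa^\downarrow:\mathbb{C}_{MA}^\kappa\to\mathbb{C}_{MA}^\gamma$. The symbol of $T$ is $G_T(z,w)=T[(z+w)^\kappa]=\sum_{\alpha\le\kappa}\binom{\kappa}{\alpha}T(z^\alpha)w^{\kappa-\alpha}\in\mathbb{C}_{\gamma\oplus\kappa}[z_1,\ldots,z_n,w_1,\ldots,w_n]$,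 with $\gamma\oplus\kappa=(\gamma_1,\ldots,\gamma_n,\kappa_1,\ldots,\kappa_n)$; the symbol of the operator $\Pi(T)$ on multi-affine polynomials is $G_{\Pi(T)}=\Pi(T)\big[\prod_{i=1}^n\prod_{j=1}^{\kappa_i}(z_{ij}+w_{ij})\big]$ ($\Pi(T)$ acting on the $z_{ij}$ variables). $\Pi^\uparrow_{\gamma\oplus\kappa}$ polarizes each $z_i$ into $z_{i1},\ldots,z_{i\gamma_i}$ and each $w_i$ into $w_{i1},\ldots,w_{i\kappa_i}$. *)

theory Defs
  imports Complex_Main
begin

text \<open>A polynomial with complex coefficients in variables of type 'v is represented
by its coefficient map: exponent vector (a function 'v \<Rightarrow> nat) \<mapsto> coefficient.\<close>

type_synonym 'v cpoly = "('v \<Rightarrow> nat) \<Rightarrow> complex"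

definition bounded :: "('v \<Rightarrow> nat) \<Rightarrow> 'v cpoly \<Rightarrow> bool" where
  "bounded d p \<longleftrightarrow> (\<forall>\<alpha>. p \<alpha> \<noteq> 0 \<longrightarrow> (\<forall>v. \<alpha> v \<le> d v))"

definition box :: "('v \<Rightarrow> nat) \<Rightarrow> ('v \<Rightarrow> nat) set" where
  "box d = {\<alpha>. \<forall>v. \<alpha> v \<le> d v}"

definition mono :: "('v \<Rightarrow> nat) \<Rightarrow> 'v cpoly" where
  "mono \<alpha> = (\<lambda>\<beta>. if \<beta> = \<alpha> then 1 else 0)"

definition mchoose :: "('v \<Rightarrow> nat) \<Rightarrow> ('v \<Rightarrow> nat) \<Rightarrow> complex" where
  "mchoose d \<alpha> = (\<Prod>v\<in>{v. d v \<noteq> 0}. of_nat (d v choose \<alpha> v))"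

text \<open>kappa in N^n, as a degree bound on the variables z_0,...,z_{n-1}\<close>
definition kz :: "nat \<Rightarrow> (nat \<Rightarrow> nat) \<Rightarrow> nat \<Rightarrow> nat" where
  "kz n \<kappa> i = (if i < n then \<kappa> i else 0)"

text \<open>Polarized variables: (v, j) with j < d v (0-based instead of 1..d v).
 The multi-affine space C_MA^d is the space of polynomials bounded by pind d.\<close>
definition pind :: "('v \<Rightarrow> nat) \<Rightarrow> 'v \<times> nat \<Rightarrow> nat" where
  "pind d x = (if snd x < d (fst x) then 1 else 0)"

definition rowsum :: "('v \<Rightarrow> nat) \<Rightarrow> ('v \<times> nat \<Rightarrow> nat) \<Rightarrow> 'v \<Rightarrow> nat" where
  "rowsum d \<beta> v = (\<Sum>j<d v. \<beta> (v, j))"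

text \<open>coefficient map of  prod_v E_{alpha v}(z_{v,0}, ..., z_{v,d v - 1})\<close>
definition esymprod :: "('v \<Rightarrow> nat) \<Rightarrow> ('v \<Rightarrow> nat) \<Rightarrow> ('v \<times> nat) cpoly" where
  "esymprod d \<alpha> = (\<lambda>\<beta>. if \<beta> \<in> box (pind d) \<and> (\<forall>v. rowsum d \<beta> v = \<alpha> v) then 1 else 0)"

text \<open>polarization operator Pi^up_d (linear extension of z^alpha \<mapsto> binom(d,alpha)^-1 prod E)\<close>
definition polup :: "('v \<Rightarrow> nat) \<Rightarrow> 'v cpoly \<Rightarrow> ('v \<times> nat) cpoly" where
  "polup d p = (\<lambda>\<beta>. \<Sum>\<alpha>\<in>box d. p \<alpha> / mchoose d \<alpha> * esymprod d \<alpha> \<beta>)"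

text \<open>projection Pi^down_d: substitute z_{v,j} \<mapsto> z_v\<close>
definition poldown :: "('v \<Rightarrow> nat) \<Rightarrow> ('v \<times> nat) cpoly \<Rightarrow> 'v cpoly" where
  "poldown d q = (\<lambda>\<alpha>. \<Sum>\<beta>\<in>{\<beta>\<in>box (pind d). \<forall>v. rowsum d \<beta> v = \<alpha> v}. q \<beta>)"

text \<open>symbol of an operator T on polynomials of degree \<le> d:
  G_T(z,w) = T[(z+w)^d] = sum_{alpha \<le> d} binom(d,alpha) T(z^alpha) w^(d-alpha),
  in variables Inl (the z-variables of the target) and Inr (the w-variables).\<close>
definition symbol :: "('v \<Rightarrow> nat) \<Rightarrow> ('v cpoly \<Rightarrow> 'w cpoly) \<Rightarrow> ('w + 'v) cpoly" where
  "symbol d T = (\<lambda>\<zeta>. \<Sum>\<alpha>\<in>box d. mchoose d \<alpha> * T (mono \<alpha>) (\<zeta> \<circ> Inl)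
                        * (if \<zeta> \<circ> Inr = (\<lambda>v. d v - \<alpha> v) then 1 else 0))"

definition polT :: "nat \<Rightarrow> (nat \<Rightarrow> nat) \<Rightarrow> (nat \<Rightarrow> nat) \<Rightarrow> (nat cpoly \<Rightarrow> nat cpoly)
    \<Rightarrow> (nat \<times> nat) cpoly \<Rightarrow> (nat \<times> nat) cpoly" where
  "polT n \<kappa> \<gamma> T = (\<lambda>q. polup (kz n \<gamma>) (T (poldown (kz n \<kappa>) q)))"

fun sumsplit :: "('a + 'b) \<times> nat \<Rightarrow> ('a \<times> nat) + ('b \<times> nat)" where
  "sumsplit (Inl a, j) = Inl (a, j)"
| "sumsplit (Inr b, j) = Inr (b, j)"

definition rename :: "('x \<Rightarrow> 'y) \<Rightarrow> 'x cpoly \<Rightarrow> 'y cpoly" where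
  "rename g p = (\<lambda>\<beta>. p (\<beta> \<circ> g))"

end

theory Submission
  imports Defs "HOL-Library.FuncSet"
begin

text \<open>Write \<open>z = \<zeta> \<circ> Inl\<close> and \<open>w = \<zeta> \<circ> Inr\<close> for the two halves of an exponent vector.
Each monomial \<open>z^\<alpha>\<close> of \<open>(z + w)^d\<close> comes with the single w-monomial \<open>w^(d - \<alpha>)\<close>, so
the coefficient of the symbol at \<open>\<zeta>\<close> is \<open>binom(d, w) T(z^(d - w))(z)\<close> when \<open>w \<le> d\<close>.
For a multi-affine degree bound the binomial is 1, and projection sends the complementary
multi-affine monomial to \<open>z^(\<kappa> - r)\<close>, where \<open>r\<close> are the row sums of \<open>w\<close>. On the other
side, polarizing in \<open>z\<close> and \<open>w\<close> separately factors both the binomial and the product of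
elementary symmetric polynomials; the w-factor picks out the exponent \<open>r\<close>, and its
binomial cancels the one coming from the symbol.\<close>

lemma finite_box:
  assumes "finite {v. d v \<noteq> 0}"
  shows "finite (box (d :: 'v \<Rightarrow> nat))"
proof -
  let ?S = "{v. d v \<noteq> 0}"
  have "inj_on (\<lambda>\<alpha>. restrict \<alpha> ?S) (box d)"
  proof (rule inj_onI, rule ext)
    fix a b v assume "a \<in> box d" "b \<in> box d" "restrict a ?S = restrict b ?S"
    moreover have "a v \<le> d v" "b v \<le> d v"
      using calculation by (simp_all add: box_def)
    ultimately show "a v = b v"
      by (cases "d v = 0") (auto dest: fun_cong[where x = v])
  qed
  moreover have "(\<lambda>\<alpha>. restrict \<alpha> ?S) ` box d \<subseteq> PiE ?S (\<lambda>v. {..d v})"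
    by (clarsimp simp: box_def restrict_PiE_iff)
  then have "finite ((\<lambda>\<alpha>. restrict \<alpha> ?S) ` box d)"
    using assms by (meson finite_PiE finite_atMost finite_subset)
  ultimately show ?thesis
    by (rule finite_imageD[rotated])
qed

lemma finite_support_pind:
  assumes "finite {v. d v \<noteq> 0}"
  shows "finite {x. pind (d :: 'v \<Rightarrow> nat) x \<noteq> 0}"
proof -
  have "{x. pind d x \<noteq> 0} \<subseteq> Sigma {v. d v \<noteq> 0} (\<lambda>v. {..<d v})"
    by (auto simp: pind_def)
  then show ?thesis
    using assms by (meson finite_SigmaI finite_lessThan finite_subset)
qed

lemma box_pind_le_1:
  assumes "w \<in> box (pind d)" and "j < d v"
  shows "w (v, j) \<le> 1"
  using assms unfolding box_def mem_Collect_eq by (metis fst_conv pind_def snd_conv)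

lemma finite_support_kz: "finite {i. kz n \<kappa> i \<noteq> 0}"
  by (rule finite_subset[of _ "{..<n}"]) (auto simp: kz_def split: if_splits)

lemma box_case_sum_iff: "\<alpha> \<in> box (case_sum g d) \<longleftrightarrow> \<alpha> \<circ> Inl \<in> box g \<and> \<alpha> \<circ> Inr \<in> box d"
  by (simp add: box_def split_sum_all)

lemma bij_betw_case_sum_box:
  "bij_betw (\<lambda>(a, b). case_sum a b) (box g \<times> box d) (box (case_sum g d))"
proof (rule bij_betw_byWitness[where f' = "\<lambda>\<alpha>. (\<alpha> \<circ> Inl, \<alpha> \<circ> Inr)"])
  show "(\<lambda>\<alpha>. (\<alpha> \<circ> Inl, \<alpha> \<circ> Inr)) ` box (case_sum g d) \<subseteq> box g \<times> box d"
    by (auto simp: box_case_sum_iff)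
qed (auto simp: box_case_sum_iff case_sum_o_inj fun_eq_iff split: sum.split)

lemma mchoose_nonzero:
  assumes "finite {v. d v \<noteq> 0}" and "b \<in> box d"
  shows "mchoose d b \<noteq> 0"
  using assms by (simp add: mchoose_def box_def binomial_eq_0_iff not_less)

lemma mchoose_complement:
  assumes "b \<in> box d"
  shows "mchoose d (\<lambda>v. d v - b v) = mchoose d b"
  using assms unfolding mchoose_def box_def
  by (intro prod.cong refl) (simp add: binomial_symmetric[symmetric])

lemma mchoose_pind:
  assumes "\<beta> \<in> box (pind d)"
  shows "mchoose (pind d) \<beta> = 1"
proof -
  have "pind d (v, j) choose \<beta> (v, j) = 1" if "pind d (v, j) \<noteq> 0" for v j
  proof -
    have "j < d v"
      using that by (simp add: pind_def split: if_splits)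
    then have "pind d (v, j) = 1" and "\<beta> (v, j) \<le> 1"
      using box_pind_le_1[OF assms] by (simp_all add: pind_def)
    then show ?thesis
      by (cases "\<beta> (v, j)") auto
  qed
  then show ?thesis
    unfolding mchoose_def by (intro prod.neutral) simp
qed

lemma mchoose_case_sum:
  assumes "finite {v. g v \<noteq> 0}" and "finite {v. d v \<noteq> 0}"
  shows "mchoose (case_sum g d) (case_sum a b) = mchoose g a * mchoose d b"
proof -
  let ?f = "\<lambda>v. (of_nat (case_sum g d v choose case_sum a b v) :: complex)"
  have "{v. case_sum g d v \<noteq> 0} = Inl ` {v. g v \<noteq> 0} \<union> Inr ` {v. d v \<noteq> 0}"
    by (rule set_eqI, case_tac x) auto
  then have "mchoose (case_sum g d) (case_sum a b)
      = prod ?f (Inl ` {v. g v \<noteq> 0}) * prod ?f (Inr ` {v. d v \<noteq> 0})"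
    unfolding mchoose_def using assms by (auto intro: prod.union_disjoint)
  also have "\<dots> = mchoose g a * mchoose d b"
    unfolding mchoose_def by (simp add: prod.reindex)
  finally show ?thesis .
qed

lemma symbol_apply:
  fixes d :: "'v \<Rightarrow> nat" and T :: "'v cpoly \<Rightarrow> 'w cpoly"
  assumes "finite {v. d v \<noteq> 0}"
  shows "symbol d T \<zeta> = (if \<zeta> \<circ> Inr \<in> box d
           then mchoose d (\<zeta> \<circ> Inr) * T (Defs.mono (\<lambda>v. d v - (\<zeta> \<circ> Inr) v)) (\<zeta> \<circ> Inl)
           else 0)"
proof -
  let ?w = "\<zeta> \<circ> Inr"
  let ?c = "\<lambda>v. d v - ?w v"
  have complement_iff: "?w = (\<lambda>v. d v - \<alpha> v) \<longleftrightarrow> ?w \<in> box d \<and> \<alpha> = ?c"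
    if "\<alpha> \<in> box d" for \<alpha>
    using that by (auto simp: box_def fun_eq_iff)
  have "symbol d T \<zeta> = (\<Sum>\<alpha>\<in>box d. if \<alpha> = ?c
          then (if ?w \<in> box d then mchoose d \<alpha> * T (Defs.mono \<alpha>) (\<zeta> \<circ> Inl) else 0) else 0)"
    unfolding symbol_def by (intro sum.cong refl) (auto simp: complement_iff)
  also have "\<dots> = (if ?w \<in> box d then mchoose d ?c * T (Defs.mono ?c) (\<zeta> \<circ> Inl) else 0)"
    using finite_box[OF assms] by (simp add: box_def)
  finally show ?thesis
    by (cases "?w \<in> box d") (simp_all only: mchoose_complement if_True if_False)
qed

lemma poldown_mono:
  assumes "finite {v. d v \<noteq> 0}" and "\<beta> \<in> box (pind d)"
  shows "poldown d (Defs.mono \<beta>) = Defs.mono (rowsum d \<beta>)"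
proof
  fix \<alpha>
  have "finite {\<beta>'\<in>box (pind d). \<forall>v. rowsum d \<beta>' v = \<alpha> v}"
    using finite_box[OF finite_support_pind[OF assms(1)]] by simp
  then show "poldown d (Defs.mono \<beta>) \<alpha> = Defs.mono (rowsum d \<beta>) \<alpha>"
    unfolding poldown_def Defs.mono_def
    by (subst sum.delta) (use assms(2) in \<open>auto simp: fun_eq_iff\<close>)
qed

lemma rowsum_complement:
  assumes "w \<in> box (pind d)"
  shows "rowsum d (\<lambda>x. pind d x - w x) v = d v - rowsum d w v"
proof -
  have "(\<Sum>j<d v. pind d (v, j) - w (v, j)) + (\<Sum>j<d v. w (v, j)) = (\<Sum>j<d v. 1)"
    unfolding sum.distrib[symmetric] using box_pind_le_1[OF assms]
    by (intro sum.cong refl) (simp add: pind_def)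
  then show ?thesis
    by (simp add: rowsum_def)
qed

lemma rowsum_in_box:
  assumes "w \<in> box (pind d)"
  shows "rowsum d w \<in> box d"
proof -
  have "(\<Sum>j<d v. w (v, j)) \<le> (\<Sum>j<d v. 1)" for v
    using box_pind_le_1[OF assms] by (intro sum_mono) simp
  then show ?thesis
    by (simp add: box_def rowsum_def)
qed

lemma esymprod_case_sum:
  "esymprod (case_sum g d) (case_sum a b) (\<zeta> \<circ> sumsplit)
     = esymprod g a (\<zeta> \<circ> Inl) * esymprod d b (\<zeta> \<circ> Inr)"
proof -
  have "\<zeta> \<circ> sumsplit \<in> box (pind (case_sum g d))
      \<longleftrightarrow> \<zeta> \<circ> Inl \<in> box (pind g) \<and> \<zeta> \<circ> Inr \<in> box (pind d)"
    unfolding box_def by (simp add: split_sum_all pind_def)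
  moreover have "(\<forall>v. rowsum (case_sum g d) (\<zeta> \<circ> sumsplit) v = case_sum a b v)
      \<longleftrightarrow> (\<forall>v. rowsum g (\<zeta> \<circ> Inl) v = a v) \<and> (\<forall>v. rowsum d (\<zeta> \<circ> Inr) v = b v)"
    by (simp add: split_sum_all rowsum_def)
  ultimately show ?thesis
    unfolding esymprod_def by simp
qed

lemma symbol_polarized_operator:
  fixes d :: "'v \<Rightarrow> nat" and g :: "'w \<Rightarrow> nat" and T :: "'v cpoly \<Rightarrow> 'w cpoly"
  assumes "finite {v. d v \<noteq> 0}"
  shows "symbol (pind d) (\<lambda>q. polup g (T (poldown d q))) \<zeta>
    = (if \<zeta> \<circ> Inr \<in> box (pind d)
       then polup g (T (Defs.mono (\<lambda>v. d v - rowsum d (\<zeta> \<circ> Inr) v))) (\<zeta> \<circ> Inl) else 0)"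
proof -
  let ?c = "\<lambda>x. pind d x - (\<zeta> \<circ> Inr) x"
  have "?c \<in> box (pind d)"
    by (simp add: box_def)
  moreover have "rowsum d ?c = (\<lambda>v. d v - rowsum d (\<zeta> \<circ> Inr) v)" if "\<zeta> \<circ> Inr \<in> box (pind d)"
    using rowsum_complement[OF that] by (simp add: fun_eq_iff)
  ultimately show ?thesis
    using assms
    by (simp add: symbol_apply[OF finite_support_pind[OF assms]] mchoose_pind poldown_mono)
qed

lemma polarized_symbol:
  fixes d :: "'v \<Rightarrow> nat" and g :: "'w \<Rightarrow> nat" and T :: "'v cpoly \<Rightarrow> 'w cpoly"
  assumes fd: "finite {v. d v \<noteq> 0}" and fg: "finite {v. g v \<noteq> 0}"
  shows "rename sumsplit (polup (case_sum g d) (symbol d T)) \<zeta>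
    = (if \<zeta> \<circ> Inr \<in> box (pind d)
       then polup g (T (Defs.mono (\<lambda>v. d v - rowsum d (\<zeta> \<circ> Inr) v))) (\<zeta> \<circ> Inl) else 0)"
proof -
  let ?r = "rowsum d (\<zeta> \<circ> Inr)"
  let ?G = "\<lambda>a b. T (Defs.mono (\<lambda>v. d v - b v)) a / mchoose g a * esymprod g a (\<zeta> \<circ> Inl)
                  * esymprod d b (\<zeta> \<circ> Inr)"
  let ?h = "\<lambda>\<alpha>. symbol d T \<alpha> / mchoose (case_sum g d) \<alpha> * esymprod (case_sum g d) \<alpha> (\<zeta> \<circ> sumsplit)"
  have "rename sumsplit (polup (case_sum g d) (symbol d T)) \<zeta>
      = (\<Sum>x\<in>box g \<times> box d. ?h ((\<lambda>(a, b). case_sum a b) x))"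
    unfolding rename_def polup_def
    by (rule sum.reindex_bij_betw[OF bij_betw_case_sum_box, symmetric])
  also have "\<dots> = (\<Sum>a\<in>box g. \<Sum>b\<in>box d. ?G a b)"
    unfolding sum.cartesian_product
    by (intro sum.cong refl)
       (clarsimp simp: case_sum_o_inj symbol_apply[OF fd] mchoose_case_sum[OF fg fd]
          esymprod_case_sum mchoose_nonzero[OF fd])
  also have "\<dots> = (if \<zeta> \<circ> Inr \<in> box (pind d)
      then (\<Sum>a\<in>box g. T (Defs.mono (\<lambda>v. d v - ?r v)) a / mchoose g a * esymprod g a (\<zeta> \<circ> Inl))
      else 0)"
  proof (cases "\<zeta> \<circ> Inr \<in> box (pind d)")
    case True
    have "(\<Sum>b\<in>box d. ?G a b) = (\<Sum>b\<in>box d. if b = ?r then ?G a ?r else 0)" for a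
      by (intro sum.cong refl) (auto simp: esymprod_def True fun_eq_iff)
    then show ?thesis
      using True rowsum_in_box[OF True] finite_box[OF fd] by (simp add: esymprod_def)
  qed (simp add: esymprod_def)
  finally show ?thesis
    by (simp add: polup_def)
qed

theorem lemma2p5:
  fixes n :: nat and \<kappa> \<gamma> :: "nat \<Rightarrow> nat" and T :: "nat cpoly \<Rightarrow> nat cpoly"
  assumes maps: "\<And>p. bounded (kz n \<kappa>) p \<Longrightarrow> bounded (kz n \<gamma>) (T p)"
    and additive: "\<And>p q. bounded (kz n \<kappa>) p \<Longrightarrow> bounded (kz n \<kappa>) q \<Longrightarrow>
                      T (\<lambda>\<alpha>. p \<alpha> + q \<alpha>) = (\<lambda>\<beta>. T p \<beta> + T q \<beta>)"
    and homogeneous: "\<And>c p. bounded (kz n \<kappa>) p \<Longrightarrow>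
                      T (\<lambda>\<alpha>. c * p \<alpha>) = (\<lambda>\<beta>. c * T p \<beta>)"
  shows "symbol (pind (kz n \<kappa>)) (polT n \<kappa> \<gamma> T)
         = rename sumsplit (polup (case_sum (kz n \<gamma>) (kz n \<kappa>)) (symbol (kz n \<kappa>) T))"
  unfolding polT_def
  by (rule ext) (simp only: symbol_polarized_operator polarized_symbol finite_support_kz)

end
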